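(* For every integer $t\ge0$: $m_2^{(2)}(4,7t+4)=31t+16$, $m_2^{(2)}(4,7t+5)=31t+17$, $m_2^{(2)}(4,7t+6)=31t+24$, $m_2^{(2)}(4,7t+7)=31t+31$, $m_2^{(2)}(4,7t+8)=31t+32$, $m_2^{(2)}(4,7t+9)=31t+33$, $m_2^{(2)}(4,7t+10)=31t+40$. Moreover, $m_2^{(2)}(4,3)=6$.
   Context: For a prime power $q$ and $N\ge1$, a multiset of points in $\mathrm{PG}(N,q)$ is a map $\mathcal{K}$ from the points to $\mathbb{Z}_{\ge0}$, with $\mathcal{K}(S)=\sum_{P\in S}\mathcal{K}(P)$; its cardinality is $\mathcal{K}(\mathrm{PG}(N,q))$. Dimensions are projective (planes have dimension 2). For $0\le r\le N-1$ and a positive integer $w$, $m_q^{(r)}(N,w)$ is the maximum cardinality of a multiset of points in $\mathrm{PG}(N,q)$ such that every $r$-dimensional subspace has multiplicity at most $w$. *)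

theory Defs
  imports Main
begin

text \<open>The projective geometry PG(N,2) over the field GF(2) = bool (addition = xor).
  Vectors of GF(2)^(N+1) are represented as functions nat \<Rightarrow> bool vanishing
  outside the coordinates 0..N.  Over GF(2) the only nonzero scalar is 1, so the
  points of PG(N,2) are exactly the nonzero vectors.\<close>

type_synonym vec2 = "nat \<Rightarrow> bool"

definition vzero :: vec2 where "vzero = (\<lambda>_. False)"

definition vadd :: "vec2 \<Rightarrow> vec2 \<Rightarrow> vec2" where
  "vadd u v = (\<lambda>i. u i \<noteq> v i)"

definition vecs :: "nat \<Rightarrow> vec2 set" where
  "vecs N = {v. \<forall>i. N < i \<longrightarrow> \<not> v i}"

definition pg_points :: "nat \<Rightarrow> vec2 set" where
  "pg_points N = vecs N - {vzero}"

text \<open>Linear subspaces of GF(2)^(N+1): contain 0 and are closed under addition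
  (closure under scalar multiplication is automatic over GF(2)).  A linear subspace
  of vector dimension r+1 has exactly 2^(r+1) elements.  The projective subspace of
  (projective) dimension r is the set of its nonzero vectors.\<close>

definition lin_subspace :: "nat \<Rightarrow> vec2 set \<Rightarrow> bool" where
  "lin_subspace N U \<longleftrightarrow> U \<subseteq> vecs N \<and> vzero \<in> U \<and> (\<forall>u\<in>U. \<forall>v\<in>U. vadd u v \<in> U)"

definition pg_subspaces :: "nat \<Rightarrow> nat \<Rightarrow> vec2 set set" where
  "pg_subspaces N r = {U - {vzero} | U. lin_subspace N U \<and> card U = 2 ^ (r + 1)}"

definition mult_set :: "(vec2 \<Rightarrow> nat) \<Rightarrow> vec2 set \<Rightarrow> nat" where
  "mult_set K S = (\<Sum>P\<in>S. K P)"

definition m2 :: "nat \<Rightarrow> nat \<Rightarrow> nat \<Rightarrow> nat" where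
  "m2 r N w = Max {mult_set K (pg_points N) | K.
      \<forall>S\<in>pg_subspaces N r. mult_set K S \<le> w}"

end

theory Submission
  imports Defs "HOL-Library.FuncSet"
begin

text \<open>
  Let K be a multiset of points of PG(4,2) in which every plane has weight at most w, and let n be
  its cardinality. Take a heaviest plane (weight W <= w), a heaviest line in it (weight L) and a
  heaviest point on that line (weight p). Averaging over the planes through the line, the lines of
  the plane through the point and the points of the line gives n + 6 L <= 7 W, W + 2 p <= 3 L and
  L <= 3 p, and maximising n over the integers subject to these constraints gives the upper bounds
  for w >= 4. They are attained by sums of copies of all points, of the complement of a solid, of
  the complement of a plane and of single points.

  For w = 3, a multiset of cardinality 7 would have points of multiplicity at most 1 and lines of
  weight at most 2, so its support would contain 7 points of PG(4,2) any 4 of which are linearly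
  independent. But by pigeonhole three subsets of 7 vectors of GF(2)^5 have the same sum, and their
  pairwise symmetric differences are nonempty zero-sum sets of total size at most 14. The six points
  of a frame attain 6.
\<close>

section \<open>Linear subspaces of GF(2)^(N+1)\<close>

lemma vadd_comm: "vadd u v = vadd v u"
  unfolding vadd_def by auto

lemma vadd_assoc: "vadd (vadd u v) w = vadd u (vadd v w)"
  unfolding vadd_def by auto

lemma vadd_vzero [simp]: "vadd vzero u = u" "vadd u vzero = u"
  unfolding vadd_def vzero_def by simp_all

lemma vadd_cancel [simp]: "vadd u (vadd u v) = v"
  unfolding vadd_def by auto

lemma vadd_cancel_right [simp]: "vadd (vadd v u) u = v"
  unfolding vadd_def by auto

lemma vadd_eq_vzero_iff [simp]: "vadd u v = vzero \<longleftrightarrow> u = v"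
  unfolding vadd_def vzero_def by (auto simp: fun_eq_iff)

lemma vzero_apply [simp]: "\<not> vzero i"
  unfolding vzero_def by simp

lemma vadd_image_iff: "v \<in> vadd x ` A \<longleftrightarrow> vadd x v \<in> A"
  by (metis image_eqI imageE vadd_cancel)

definition unit_vec :: "nat \<Rightarrow> vec2" where
  "unit_vec i = (\<lambda>k. k = i)"

definition coord_zero :: "nat set \<Rightarrow> vec2 set" where
  "coord_zero I = {v. \<forall>i\<in>I. \<not> v i}"

lemma vzero_in_coord_zero [simp]: "vzero \<in> coord_zero I"
  unfolding coord_zero_def vzero_def by simp

lemma bij_betw_vecs_coord_zero:
  "bij_betw (\<lambda>v. {i. v i}) (vecs N \<inter> coord_zero I) (Pow ({0..N} - I))"
  by (rule bij_betw_byWitness[where f'="\<lambda>S i. i \<in> S"])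
    (auto simp: vecs_def coord_zero_def not_less)

lemma finite_vecs [simp]: "finite (vecs N)"
  using bij_betw_finite[OF bij_betw_vecs_coord_zero[of N "{}"]] by (simp add: coord_zero_def)

lemma vzero_in_vecs [simp]: "vzero \<in> vecs N"
  unfolding vecs_def by simp

lemma card_vecs_coord_zero:
  assumes "I \<subseteq> {0..N}"
  shows "card (vecs N \<inter> coord_zero I) = 2 ^ (Suc N - card I)"
proof -
  have "card (vecs N \<inter> coord_zero I) = card (Pow ({0..N} - I))"
    by (rule bij_betw_same_card[OF bij_betw_vecs_coord_zero])
  also have "\<dots> = 2 ^ (Suc N - card I)"
    using assms by (simp add: card_Pow card_Diff_subset finite_subset)
  finally show ?thesis .
qed

lemma card_vecs: "card (vecs N) = 2 ^ Suc N"
  using card_vecs_coord_zero[of "{}" N] by (simp add: coord_zero_def)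

lemma lin_subspace_subset: "lin_subspace N U \<Longrightarrow> U \<subseteq> vecs N"
  and lin_subspace_vzero: "lin_subspace N U \<Longrightarrow> vzero \<in> U"
  and lin_subspace_vadd: "lin_subspace N U \<Longrightarrow> u \<in> U \<Longrightarrow> v \<in> U \<Longrightarrow> vadd u v \<in> U"
  unfolding lin_subspace_def by blast+

lemma lin_subspace_finite: "lin_subspace N U \<Longrightarrow> finite U"
  using finite_subset[OF lin_subspace_subset finite_vecs] .

lemma lin_subspace_vecs: "M \<le> N \<Longrightarrow> lin_subspace N (vecs M)"
  unfolding lin_subspace_def vecs_def vadd_def by auto

lemma lin_subspace_whole: "lin_subspace N (vecs N)"
  by (rule lin_subspace_vecs) simp

lemma lin_subspace_singleton_vzero: "lin_subspace N {vzero}"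
  unfolding lin_subspace_def by simp

lemma lin_subspace_pair: "P \<in> vecs N \<Longrightarrow> lin_subspace N {vzero, P}"
  unfolding lin_subspace_def by auto

lemma lin_subspace_Int_coord_zero: "lin_subspace N U \<Longrightarrow> lin_subspace N (U \<inter> coord_zero I)"
  unfolding lin_subspace_def coord_zero_def by (auto simp: vadd_def)

lemma pg_subspacesI: "lin_subspace N U \<Longrightarrow> card U = 2 ^ (r + 1) \<Longrightarrow> U - {vzero} \<in> pg_subspaces N r"
  unfolding pg_subspaces_def by auto

lemma m2_eqI:
  assumes upper: "\<And>K. \<forall>S\<in>pg_subspaces N r. mult_set K S \<le> w \<Longrightarrow> mult_set K (pg_points N) \<le> m"
    and witness: "\<forall>S\<in>pg_subspaces N r. mult_set K' S \<le> w" "mult_set K' (pg_points N) = m"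
  shows "m2 r N w = m"
  unfolding m2_def
proof (rule Max_eqI)
  show "finite {mult_set K (pg_points N) |K. \<forall>S\<in>pg_subspaces N r. mult_set K S \<le> w}"
    by (rule finite_subset[of _ "{..m}"]) (auto dest: upper)
qed (use upper witness in auto)

lemma card_Int_coord_hyperplane:
  assumes U: "lin_subspace N U" and u: "u \<in> U" "u i"
  shows "card U = 2 * card (U \<inter> coord_zero {i})"
proof -
  have "bij_betw (vadd u) (U \<inter> coord_zero {i}) (U - coord_zero {i})"
    by (rule bij_betw_byWitness[where f'="vadd u"])
      (use u lin_subspace_vadd[OF U] in \<open>auto simp: coord_zero_def vadd_def\<close>)
  then have "card (U - coord_zero {i}) = card (U \<inter> coord_zero {i})"
    by (simp add: bij_betw_same_card)
  then show ?thesis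
    using card_Int_Diff[OF lin_subspace_finite[OF U], of "coord_zero {i}"] by simp
qed

lemma card_le_coord_zero:
  assumes U: "lin_subspace N U" and "finite I"
  shows "card U \<le> 2 ^ card I * card (U \<inter> coord_zero I)"
  using \<open>finite I\<close>
proof (induction I rule: finite_induct)
  case empty
  then show ?case by (simp add: coord_zero_def)
next
  case (insert i I)
  let ?V = "U \<inter> coord_zero I"
  have "card ?V \<le> 2 * card (?V \<inter> coord_zero {i})"
  proof (cases "\<exists>u\<in>?V. u i")
    case True
    then obtain u where "u \<in> ?V" "u i" by blast
    then show ?thesis
      using card_Int_coord_hyperplane[OF lin_subspace_Int_coord_zero[OF U]] by simp
  next
    case False
    then have "?V \<inter> coord_zero {i} = ?V" by (auto simp: coord_zero_def)
    then show ?thesis by simp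
  qed
  moreover have "?V \<inter> coord_zero {i} = U \<inter> coord_zero (insert i I)"
    by (auto simp: coord_zero_def)
  ultimately have
    "2 ^ card I * card ?V \<le> 2 ^ card (insert i I) * card (U \<inter> coord_zero (insert i I))"
    using insert by simp
  then show ?case
    using insert.IH by linarith
qed

lemma card_diff_coord_zero_le:
  assumes U: "lin_subspace N U" and "finite I"
  shows "2 ^ card I * card (U - coord_zero I) \<le> (2 ^ card I - 1) * card U"
proof -
  have split: "card U = card (U \<inter> coord_zero I) + card (U - coord_zero I)"
    by (rule card_Int_Diff[OF lin_subspace_finite[OF U]])
  have "2 ^ card I * card (U - coord_zero I) + card U \<le> 2 ^ card I * card U"
    using card_le_coord_zero[OF assms] split by (simp add: algebra_simps)
  then show ?thesis by (simp add: algebra_simps diff_mult_distrib)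
qed

lemma ex_lin_subspace_half:
  assumes U: "lin_subspace N U" and "1 < card U"
  obtains C where "lin_subspace N C" "C \<subseteq> U" "card U = 2 * card C"
proof -
  have "U \<noteq> {vzero}" using \<open>1 < card U\<close> by auto
  then obtain u where u: "u \<in> U" "u \<noteq> vzero"
    using lin_subspace_vzero[OF U] by blast
  then obtain i where "u i" by (auto simp: vzero_def fun_eq_iff)
  then show thesis
    using that[OF lin_subspace_Int_coord_zero[OF U]] card_Int_coord_hyperplane[OF U u(1)] by blast
qed

section \<open>Averaging over the extensions of a subspace\<close>

definition adjoin :: "vec2 \<Rightarrow> vec2 set \<Rightarrow> vec2 set" where
  "adjoin x A = A \<union> vadd x ` A"

lemma lin_subspace_adjoin:
  assumes A: "lin_subspace N A" and x: "x \<in> vecs N"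
  shows "lin_subspace N (adjoin x A)"
  unfolding lin_subspace_def adjoin_def
proof (intro conjI ballI)
  show "A \<union> vadd x ` A \<subseteq> vecs N"
    using lin_subspace_subset[OF A] x by (auto simp: vecs_def vadd_def)
  show "vzero \<in> A \<union> vadd x ` A"
    using lin_subspace_vzero[OF A] by blast
  fix u v assume "u \<in> A \<union> vadd x ` A" "v \<in> A \<union> vadd x ` A"
  then consider "u \<in> A" "v \<in> A" | "u \<in> A" "vadd x v \<in> A" | "vadd x u \<in> A" "v \<in> A"
    | "vadd x u \<in> A" "vadd x v \<in> A"
    by (auto simp: vadd_image_iff)
  then have "vadd u v \<in> A \<or> vadd x (vadd u v) \<in> A"
  proof cases
    case 1
    then show ?thesis using lin_subspace_vadd[OF A] by blast
  next
    case 2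
    then have "vadd u (vadd x v) \<in> A" using lin_subspace_vadd[OF A] by blast
    then show ?thesis by (metis vadd_assoc vadd_comm)
  next
    case 3
    then have "vadd (vadd x u) v \<in> A" using lin_subspace_vadd[OF A] by blast
    then show ?thesis by (simp add: vadd_assoc)
  next
    case 4
    then have "vadd (vadd x u) (vadd x v) \<in> A" using lin_subspace_vadd[OF A] by blast
    then show ?thesis by (metis vadd_assoc vadd_cancel vadd_comm)
  qed
  then show "vadd u v \<in> A \<union> vadd x ` A"
    by (auto simp: vadd_image_iff)
qed

lemma adjoin_subset:
  "lin_subspace N B \<Longrightarrow> A \<subseteq> B \<Longrightarrow> x \<in> B \<Longrightarrow> adjoin x A \<subseteq> B"
  unfolding adjoin_def using lin_subspace_vadd by blast

lemma adjoin_disjoint: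
  assumes A: "lin_subspace N A" and x: "x \<notin> A"
  shows "A \<inter> vadd x ` A = {}"
proof -
  have "vadd x v \<notin> A" if "v \<in> A" for v
    using x lin_subspace_vadd[OF A _ that] by fastforce
  then show ?thesis by (auto simp: vadd_image_iff)
qed

lemma card_adjoin:
  assumes A: "lin_subspace N A" and x: "x \<notin> A"
  shows "card (adjoin x A) = 2 * card A"
proof -
  have "inj_on (vadd x) A" by (rule inj_onI) (metis vadd_cancel)
  then show ?thesis
    unfolding adjoin_def
    using card_Un_disjoint[OF _ _ adjoin_disjoint[OF A x]] lin_subspace_finite[OF A]
    by (simp add: card_image)
qed

lemma mult_set_adjoin:
  assumes A: "lin_subspace N A" and x: "x \<notin> A"
  shows "mult_set K (adjoin x A - {vzero}) = mult_set K (A - {vzero}) + (\<Sum>a\<in>A. K (vadd x a))"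
proof -
  have fin: "finite A" by (rule lin_subspace_finite[OF A])
  have "vzero \<notin> vadd x ` A"
    using x by (auto simp: vadd_image_iff)
  then have "adjoin x A - {vzero} = (A - {vzero}) \<union> vadd x ` A"
    unfolding adjoin_def by blast
  moreover have "inj_on (vadd x) A" by (rule inj_onI) (metis vadd_cancel)
  moreover have "(A - {vzero}) \<inter> vadd x ` A = {}"
    using adjoin_disjoint[OF A x] by blast
  ultimately show ?thesis
    unfolding mult_set_def using fin by (simp add: sum.union_disjoint sum.reindex)
qed

lemma sum_translates:
  assumes A: "lin_subspace N A" and B: "lin_subspace N B" and AB: "A \<subseteq> B"
  shows "(\<Sum>x\<in>B - A. \<Sum>a\<in>A. K (vadd x a)) = card A * mult_set K (B - A)"
proof -
  have "(\<Sum>x\<in>B - A. K (vadd x a)) = mult_set K (B - A)" if a: "a \<in> A" for a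
  proof -
    have shift: "(\<lambda>y. vadd y a) ` (B - A) \<subseteq> B - A"
    proof (intro image_subsetI DiffI)
      fix y assume y: "y \<in> B - A"
      then show "vadd y a \<in> B" using a AB lin_subspace_vadd[OF B] by blast
      show "vadd y a \<notin> A"
      proof
        assume "vadd y a \<in> A"
        then have "vadd (vadd y a) a \<in> A" using lin_subspace_vadd[OF A _ a] by blast
        then show False using y by simp
      qed
    qed
    have "bij_betw (\<lambda>y. vadd y a) (B - A) (B - A)"
      by (rule bij_betw_byWitness[where f'="\<lambda>y. vadd y a"]) (use shift in simp_all)
    then show ?thesis
      unfolding mult_set_def by (rule sum.reindex_bij_betw)
  qed
  then have "(\<Sum>a\<in>A. \<Sum>x\<in>B - A. K (vadd x a)) = card A * mult_set K (B - A)"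
    by simp
  then show ?thesis by (simp add: sum.swap[of _ A])
qed

text \<open>
  Sum the bound over the extensions adjoin x A for all x in B - A: every vector of B - A then
  lies in exactly card A of them.
\<close>

lemma extension_averaging:
  assumes A: "lin_subspace N A" and B: "lin_subspace N B" and AB: "A \<subseteq> B"
    and card_AB: "2 * card A \<le> card B"
    and bound: "\<And>C. lin_subspace N C \<Longrightarrow> A \<subseteq> C \<Longrightarrow> C \<subseteq> B \<Longrightarrow> card C = 2 * card A
      \<Longrightarrow> mult_set K (C - {vzero}) \<le> M"
  shows "card A * mult_set K (B - {vzero}) + (card B - 2 * card A) * mult_set K (A - {vzero})
    \<le> (card B - card A) * M"
proof -
  have each: "(\<Sum>a\<in>A. K (vadd x a)) + mult_set K (A - {vzero}) \<le> M" if x: "x \<in> B - A" for x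
  proof -
    have "x \<in> vecs N" using x lin_subspace_subset[OF B] by blast
    then have "mult_set K (adjoin x A - {vzero}) \<le> M"
      using x by (intro bound lin_subspace_adjoin[OF A] adjoin_subset[OF B AB] card_adjoin[OF A])
        (auto simp: adjoin_def)
    then show ?thesis using mult_set_adjoin[OF A] x by simp
  qed
  have "card A * mult_set K (B - A) + card (B - A) * mult_set K (A - {vzero})
      = (\<Sum>x\<in>B - A. (\<Sum>a\<in>A. K (vadd x a)) + mult_set K (A - {vzero}))"
    by (simp add: sum.distrib sum_translates[OF A B AB])
  also have "\<dots> \<le> card (B - A) * M"
    using sum_mono[of "B - A", OF each] by simp
  finally have avg: "card A * mult_set K (B - A) + card (B - A) * mult_set K (A - {vzero})
      \<le> card (B - A) * M" .
  have "mult_set K (B - {vzero}) = mult_set K (B - A) + mult_set K (A - {vzero})"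
    unfolding mult_set_def using lin_subspace_finite[OF B] lin_subspace_vzero[OF A] AB
    by (subst sum.union_disjoint[symmetric]) (auto intro: sum.cong finite_subset)
  moreover have "card (B - A) = card B - card A"
    using card_Diff_subset[OF finite_subset[OF AB lin_subspace_finite[OF B]] AB] .
  moreover obtain e where "card B = 2 * card A + e"
    using card_AB le_Suc_ex by blast
  ultimately show ?thesis using avg by (simp add: algebra_simps)
qed

lemma ex_heaviest_subspace:
  assumes B: "lin_subspace N B" and C0: "lin_subspace N C0" "C0 \<subseteq> B" "card C0 = c"
  obtains C where "lin_subspace N C" "C \<subseteq> B" "card C = c"
    "\<And>C'. lin_subspace N C' \<Longrightarrow> C' \<subseteq> B \<Longrightarrow> card C' = c
      \<Longrightarrow> mult_set K (C' - {vzero}) \<le> mult_set K (C - {vzero})"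
proof -
  let ?P = "\<lambda>C. lin_subspace N C \<and> C \<subseteq> B \<and> card C = c"
  let ?w = "\<lambda>C. mult_set K (C - {vzero})"
  have bounded: "?w C < Suc (?w B)" if "?P C" for C
    using that lin_subspace_finite[OF B] unfolding mult_set_def
    by (simp add: less_Suc_eq_le sum_mono2 Diff_mono)
  have "\<exists>C. ?P C \<and> (\<forall>C'. ?P C' \<longrightarrow> ?w C' \<le> ?w C)"
    by (rule ex_has_greatest_nat[where k = C0]) (use C0 bounded in auto)
  then show thesis using that by blast
qed

lemma ex_heaviest_half_subspace:
  assumes B: "lin_subspace N B" and "1 < card B"
  obtains C where "lin_subspace N C" "C \<subseteq> B" "card B = 2 * card C"
    "\<And>C'. lin_subspace N C' \<Longrightarrow> C' \<subseteq> B \<Longrightarrow> card B = 2 * card C'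
      \<Longrightarrow> mult_set K (C' - {vzero}) \<le> mult_set K (C - {vzero})"
proof -
  obtain C0 where C0: "lin_subspace N C0" "C0 \<subseteq> B" "card B = 2 * card C0"
    using ex_lin_subspace_half[OF assms] .
  obtain C where C: "lin_subspace N C" "C \<subseteq> B" "card C = card C0"
    and C_max: "\<And>C'. lin_subspace N C' \<Longrightarrow> C' \<subseteq> B \<Longrightarrow> card C' = card C0
      \<Longrightarrow> mult_set K (C' - {vzero}) \<le> mult_set K (C - {vzero})"
    using ex_heaviest_subspace[OF B C0(1,2) refl, where K = K] by blast
  show thesis
  proof (rule that[OF C(1,2)])
    show "card B = 2 * card C" using C(3) C0(3) by simp
    fix C' assume "lin_subspace N C'" "C' \<subseteq> B" "card B = 2 * card C'"
    then show "mult_set K (C' - {vzero}) \<le> mult_set K (C - {vzero})"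
      using C_max C0(3) by simp
  qed
qed

section \<open>Sums of sets of vectors and independence\<close>

lemma card_sym_diff:
  assumes "finite A" "finite B"
  shows "card (sym_diff A B) + 2 * card (A \<inter> B) = card A + card B"
proof -
  have "card (sym_diff A B) = card (A - B) + card (B - A)"
    by (rule card_Un_disjoint) (use assms in auto)
  moreover have "card A = card (A \<inter> B) + card (A - B)" "card B = card (A \<inter> B) + card (B - A)"
    using card_Int_Diff[OF assms(1), of B] card_Int_Diff[OF assms(2), of A]
    by (simp_all add: Int_commute)
  ultimately show ?thesis by simp
qed

definition vsum :: "vec2 set \<Rightarrow> vec2" where
  "vsum X = (\<lambda>i. odd (card {x\<in>X. x i}))"

definition span :: "vec2 set \<Rightarrow> vec2 set" where
  "span X = vsum ` Pow X"

definition lin_indep :: "vec2 set \<Rightarrow> bool" where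
  "lin_indep X \<longleftrightarrow> (\<forall>T\<subseteq>X. T \<noteq> {} \<longrightarrow> vsum T \<noteq> vzero)"

lemma vsum_empty [simp]: "vsum {} = vzero"
  unfolding vsum_def vzero_def by simp

lemma vsum_insert:
  assumes "finite X" "x \<notin> X"
  shows "vsum (insert x X) = vadd x (vsum X)"
proof
  fix i
  have "{y\<in>insert x X. y i} = (if x i then insert x {y\<in>X. y i} else {y\<in>X. y i})"
    by auto
  then show "vsum (insert x X) i = vadd x (vsum X) i"
    unfolding vsum_def vadd_def using assms by auto
qed

lemma vsum_sym_diff:
  assumes "finite A" "finite B"
  shows "vsum (sym_diff A B) = vadd (vsum A) (vsum B)"
proof
  fix i
  let ?A = "{x\<in>A. x i}" and ?B = "{x\<in>B. x i}"
  have "card (sym_diff ?A ?B) + 2 * card (?A \<inter> ?B) = card ?A + card ?B"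
    by (rule card_sym_diff) (use assms in auto)
  then have "odd (card (sym_diff ?A ?B) + 2 * card (?A \<inter> ?B)) \<longleftrightarrow> odd (card ?A + card ?B)"
    by simp
  moreover have "{x\<in>sym_diff A B. x i} = sym_diff ?A ?B" by auto
  ultimately show "vsum (sym_diff A B) i = vadd (vsum A) (vsum B) i"
    unfolding vsum_def vadd_def by simp
qed

lemma vsum_in_vecs:
  assumes "X \<subseteq> vecs N"
  shows "vsum X \<in> vecs N"
  unfolding vecs_def vsum_def
proof (intro CollectI allI impI)
  fix i assume "N < i"
  then have empty: "{x\<in>X. x i} = {}" using assms unfolding vecs_def by auto
  show "\<not> odd (card {x\<in>X. x i})" unfolding empty by simp
qed

lemma vsum_in_lin_subspace:
  assumes U: "lin_subspace N U" and "finite X" "X \<subseteq> U"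
  shows "vsum X \<in> U"
  using assms(2,3)
proof (induction X rule: finite_induct)
  case empty
  then show ?case using lin_subspace_vzero[OF U] by (simp only: vsum_empty)
next
  case (insert x X)
  then show ?case using vsum_insert lin_subspace_vadd[OF U] by simp
qed

lemma lin_subspace_span:
  assumes "finite X" "X \<subseteq> vecs N"
  shows "lin_subspace N (span X)"
  unfolding lin_subspace_def span_def
proof (intro conjI ballI)
  show "vsum ` Pow X \<subseteq> vecs N" using vsum_in_vecs assms(2) by blast
  show "vzero \<in> vsum ` Pow X" using vsum_empty by (metis Pow_bottom image_eqI)
  fix u v assume "u \<in> vsum ` Pow X" "v \<in> vsum ` Pow X"
  then obtain A B where "A \<subseteq> X" "B \<subseteq> X" "u = vsum A" "v = vsum B" by auto
  with assms(1) have "vadd u v = vsum (sym_diff A B)" "sym_diff A B \<in> Pow X"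
    by (auto simp: vsum_sym_diff finite_subset)
  then show "vadd u v \<in> vsum ` Pow X" by blast
qed

lemma subset_span: "X \<subseteq> span X"
proof
  fix x assume "x \<in> X"
  then have "vsum {x} = x" "{x} \<in> Pow X"
    using vsum_insert[of "{}" x] by simp_all
  then show "x \<in> span X" unfolding span_def by (metis image_eqI)
qed

lemma card_span:
  assumes "finite X" "lin_indep X"
  shows "card (span X) = 2 ^ card X"
proof -
  have "inj_on vsum (Pow X)"
  proof (rule inj_onI)
    fix A B assume "A \<in> Pow X" "B \<in> Pow X" "vsum A = vsum B"
    with assms(1) have "vsum (sym_diff A B) = vzero" "sym_diff A B \<subseteq> X"
      by (auto simp: vsum_sym_diff finite_subset)
    then have "sym_diff A B = {}" using assms(2) unfolding lin_indep_def by blast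
    then show "A = B" by blast
  qed
  then show ?thesis unfolding span_def using assms(1) by (simp add: card_image card_Pow)
qed

lemma lin_indep_card_le:
  assumes U: "lin_subspace N U" and "finite X" "X \<subseteq> U" "lin_indep X"
  shows "2 ^ card X \<le> card U"
proof -
  have "span X \<subseteq> U"
    unfolding span_def
  proof (rule image_subsetI)
    fix T assume "T \<in> Pow X"
    then show "vsum T \<in> U"
      using vsum_in_lin_subspace[OF U, of T] assms(2,3) finite_subset by auto
  qed
  then show ?thesis
    using card_mono[OF lin_subspace_finite[OF U]] card_span[OF assms(2,4)] by metis
qed

lemma lin_indep_insert:
  assumes "finite X" "lin_indep X" "z \<notin> span X"
  shows "lin_indep (insert z X)"
  unfolding lin_indep_def
proof (intro allI impI)
  fix T assume T: "T \<subseteq> insert z X" "T \<noteq> {}"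
  show "vsum T \<noteq> vzero"
  proof (cases "z \<in> T")
    case True
    have "T - {z} \<subseteq> X" "finite (T - {z})" using T assms(1) finite_subset by auto
    then have "vsum (T - {z}) \<noteq> z"
      using assms(3) unfolding span_def by (metis PowI image_eqI)
    then show ?thesis
      using vsum_insert[of "T - {z}" z] True \<open>finite (T - {z})\<close> by (simp add: insert_absorb)
  next
    case False
    then show ?thesis using T assms(2) unfolding lin_indep_def by blast
  qed
qed

lemma lin_indep_if_sparse:
  assumes S: "S \<subseteq> vecs N"
    and sparse: "\<And>U j. lin_subspace N U \<Longrightarrow> card U = 2 ^ j \<Longrightarrow> j < k \<Longrightarrow> card (S \<inter> U) \<le> j"
    and T: "finite T" "T \<subseteq> S" "card T \<le> k"
  shows "lin_indep T"
  using T
proof (induction T rule: finite_induct)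
  case empty
  then show ?case unfolding lin_indep_def by blast
next
  case (insert z X)
  then have X: "X \<subseteq> S" "card X < k" "lin_indep X" by auto
  have "z \<notin> span X"
  proof
    assume "z \<in> span X"
    then have "insert z X \<subseteq> S \<inter> span X"
      using insert.prems(1) subset_span by blast
    moreover have "lin_subspace N (span X)"
      using lin_subspace_span insert.hyps(1) X(1) S by blast
    ultimately have "card (insert z X) \<le> card (S \<inter> span X)"
      by (meson card_mono lin_subspace_finite finite_Int)
    also have "\<dots> \<le> card X"
      using sparse[OF \<open>lin_subspace N (span X)\<close> card_span[OF insert.hyps(1) X(3)] X(2)] .
    finally show False using insert.hyps by simp
  qed
  then show ?case by (rule lin_indep_insert[OF insert.hyps(1) X(3)])
qed

lemma ex_three_subsets_same_vsum:
  assumes S: "S \<subseteq> vecs N" "finite S" "N + 3 \<le> card S"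
  obtains T1 T2 T3 where "T1 \<subseteq> S" "T2 \<subseteq> S" "T3 \<subseteq> S" "T1 \<noteq> T2" "T1 \<noteq> T3" "T2 \<noteq> T3"
    "vsum T1 = vsum T2" "vsum T2 = vsum T3"
proof -
  have "vsum \<in> Pow S \<rightarrow> vecs N" using vsum_in_vecs S(1) by blast
  moreover have "vecs N \<noteq> {}" using vzero_in_vecs by blast
  ultimately have "\<exists>y\<in>vecs N. card (vsum -` {y} \<inter> Pow S) * card (vecs N) \<ge> card (Pow S)"
    using S(2) by (intro pigeonhole_card) simp_all
  then obtain y where y: "card (vsum -` {y} \<inter> Pow S) * card (vecs N) \<ge> card (Pow S)"
    by blast
  have "4 * card (vecs N) = (2::nat) ^ (N + 3)" by (simp add: card_vecs power_add)
  also have "\<dots> \<le> 2 ^ card S" by (rule power_increasing) (use S(3) in simp_all)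
  also have "\<dots> = card (Pow S)" using S(2) by (simp add: card_Pow)
  finally have "4 * card (vecs N) \<le> card (vsum -` {y} \<inter> Pow S) * card (vecs N)"
    using y by linarith
  then have "3 \<le> card (vsum -` {y} \<inter> Pow S)"
    by (simp add: card_vecs)
  then obtain F where F: "F \<subseteq> vsum -` {y} \<inter> Pow S" "card F = 3"
    by (meson obtain_subset_with_card_n)
  then obtain T1 T2 T3 where "F = {T1, T2, T3}" "T1 \<noteq> T2" "T1 \<noteq> T3" "T2 \<noteq> T3"
    unfolding card_3_iff by blast
  moreover from this F(1) have "T1 \<subseteq> S" "T2 \<subseteq> S" "T3 \<subseteq> S" "vsum T1 = vsum T2" "vsum T2 = vsum T3"
    by auto
  ultimately show thesis using that by blast
qed

lemma ex_short_zero_sum: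
  assumes S: "S \<subseteq> vecs N" "finite S" "N + 3 \<le> card S"
  obtains D where "D \<subseteq> S" "D \<noteq> {}" "vsum D = vzero" "3 * card D \<le> 2 * card S"
proof -
  obtain T1 T2 T3 where T: "T1 \<subseteq> S" "T2 \<subseteq> S" "T3 \<subseteq> S" "T1 \<noteq> T2" "T1 \<noteq> T3" "T2 \<noteq> T3"
    "vsum T1 = vsum T2" "vsum T2 = vsum T3"
    using ex_three_subsets_same_vsum[OF S] by blast
  have fin: "finite T1" "finite T2" "finite T3"
    using T(1-3) S(2) by (metis finite_subset)+
  define D1 D2 where "D1 = sym_diff T1 T2" and "D2 = sym_diff T1 T3"
  have D_fin: "finite D1" "finite D2" unfolding D1_def D2_def using fin by auto
  have D: "D1 \<subseteq> S" "D2 \<subseteq> S" "sym_diff D1 D2 \<subseteq> S"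
    "D1 \<noteq> {}" "D2 \<noteq> {}" "sym_diff D1 D2 \<noteq> {}"
    unfolding D1_def D2_def using T(1-6) by blast+
  have zero: "vsum D1 = vzero" "vsum D2 = vzero" "vsum (sym_diff D1 D2) = vzero"
    unfolding D1_def D2_def using T(7,8) fin by (simp_all add: vsum_sym_diff)
  have "card (sym_diff D1 D2) + 2 * card (D1 \<inter> D2) = card D1 + card D2"
    by (rule card_sym_diff[OF D_fin])
  moreover have "card (D1 \<union> D2) + card (D1 \<inter> D2) = card D1 + card D2"
    by (rule card_Un_Int[OF D_fin, symmetric])
  moreover have "card (D1 \<union> D2) \<le> card S"
    using D(1,2) S(2) by (simp add: card_mono)
  ultimately have "card D1 + card D2 + card (sym_diff D1 D2) \<le> 2 * card S" by linarith
  then have "3 * card D1 \<le> 2 * card S \<or> 3 * card D2 \<le> 2 * card S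
      \<or> 3 * card (sym_diff D1 D2) \<le> 2 * card S" by linarith
  then show thesis using that D zero by blast
qed

section \<open>Planes of weight at least 4\<close>

lemma heaviest_flag_inequalities:
  assumes valid: "\<forall>S\<in>pg_subspaces 4 2. mult_set K S \<le> w"
  obtains W L p where "mult_set K (pg_points 4) + 6 * L \<le> 7 * W"
    "W + 2 * p \<le> 3 * L" "L \<le> 3 * p" "W \<le> w"
proof -
  let ?w = "\<lambda>C. mult_set K (C - {vzero})"
  note V = lin_subspace_whole[of 4]
  have V2: "lin_subspace 4 (vecs 2)" "vecs 2 \<subseteq> vecs 4" "card (vecs 2) = 8"
    by (simp_all add: lin_subspace_vecs card_vecs) (auto simp: vecs_def)
  obtain P2 where P2: "lin_subspace 4 P2" "P2 \<subseteq> vecs 4" "card P2 = 8"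
    and P2_max: "\<And>C. lin_subspace 4 C \<Longrightarrow> C \<subseteq> vecs 4 \<Longrightarrow> card C = 8 \<Longrightarrow> ?w C \<le> ?w P2"
    using ex_heaviest_subspace[OF V V2, where K = K] by blast
  obtain P1 where P1: "lin_subspace 4 P1" "P1 \<subseteq> P2" "card P2 = 2 * card P1"
    and P1_max: "\<And>C. lin_subspace 4 C \<Longrightarrow> C \<subseteq> P2 \<Longrightarrow> card P2 = 2 * card C \<Longrightarrow> ?w C \<le> ?w P1"
    using ex_heaviest_half_subspace[OF P2(1), where K = K] P2(3) by auto
  obtain P0 where P0: "lin_subspace 4 P0" "P0 \<subseteq> P1" "card P1 = 2 * card P0"
    and P0_max: "\<And>C. lin_subspace 4 C \<Longrightarrow> C \<subseteq> P1 \<Longrightarrow> card P1 = 2 * card C \<Longrightarrow> ?w C \<le> ?w P0"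
    using ex_heaviest_half_subspace[OF P1(1), where K = K] P1(3) P2(3) by auto
  have card_P1: "card P1 = 4" and card_P0: "card P0 = 2"
    using P2(3) P1(3) P0(3) by simp_all
  have "?w P2 \<le> w" using valid pg_subspacesI[OF P2(1), of 2] P2(3) by simp
  moreover have "4 * ?w (vecs 4) + 24 * ?w P1 \<le> 28 * ?w P2"
    using extension_averaging[OF P1(1) V lin_subspace_subset[OF P1(1)], of K "?w P2"] card_P1 P2_max
    by (simp add: card_vecs)
  moreover have "2 * ?w P2 + 4 * ?w P0 \<le> 6 * ?w P1"
    using extension_averaging[OF P0(1) P2(1), of K "?w P1"] P0(2) P1(2) P2(3) card_P1 card_P0 P1_max
    by simp
  moreover have "?w P1 \<le> 3 * ?w P0"
    using extension_averaging[OF lin_subspace_singleton_vzero P1(1), of K "?w P0"]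
      lin_subspace_vzero[OF P1(1)] card_P1 P0_max by simp
  ultimately show thesis
    using that[of "?w P1" "?w P2" "?w P0"] by (simp add: pg_points_def)
qed

text \<open>
  Linear arithmetic alone only yields 7 n <= 31 W; the case split on L mod 3 supplies the
  integrality constraint p >= L / 3 rounded up.
\<close>

lemma flag_inequalities_bound:
  fixes n W L p t :: nat
  assumes flag: "n + 6 * L \<le> 7 * W" "W + 2 * p \<le> 3 * L" "L \<le> 3 * p"
  shows "W \<le> 7 * t + 4 \<Longrightarrow> n \<le> 31 * t + 16"
    and "W \<le> 7 * t + 5 \<Longrightarrow> n \<le> 31 * t + 17"
    and "W \<le> 7 * t + 6 \<Longrightarrow> n \<le> 31 * t + 24"
    and "W \<le> 7 * t + 7 \<Longrightarrow> n \<le> 31 * t + 31"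
    and "W \<le> 7 * t + 8 \<Longrightarrow> n \<le> 31 * t + 32"
    and "W \<le> 7 * t + 9 \<Longrightarrow> n \<le> 31 * t + 33"
    and "W \<le> 7 * t + 10 \<Longrightarrow> n \<le> 31 * t + 40"
proof -
  define k where "k = L div 3"
  have "L = 3 * k \<and> k \<le> p \<or> L = 3 * k + 1 \<and> k + 1 \<le> p \<or> L = 3 * k + 2 \<and> k + 1 \<le> p"
    using flag(3) unfolding k_def by arith
  moreover have "k \<le> t \<or> k = t + 1 \<or> t + 2 \<le> k" by arith
  ultimately show "W \<le> 7 * t + 4 \<Longrightarrow> n \<le> 31 * t + 16"
    and "W \<le> 7 * t + 5 \<Longrightarrow> n \<le> 31 * t + 17"
    and "W \<le> 7 * t + 6 \<Longrightarrow> n \<le> 31 * t + 24"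
    and "W \<le> 7 * t + 7 \<Longrightarrow> n \<le> 31 * t + 31"
    and "W \<le> 7 * t + 8 \<Longrightarrow> n \<le> 31 * t + 32"
    and "W \<le> 7 * t + 9 \<Longrightarrow> n \<le> 31 * t + 33"
    and "W \<le> 7 * t + 10 \<Longrightarrow> n \<le> 31 * t + 40"
    using flag by (elim disjE conjE; linarith)+
qed

text \<open>
  The sets coord_zero {0} and coord_zero {0, 1} are a solid and a plane of PG(4,2); every plane
  meets them in at least 3 points and 1 point respectively.
\<close>

definition extremal_multiset :: "nat \<Rightarrow> nat \<Rightarrow> nat \<Rightarrow> nat \<Rightarrow> vec2 \<Rightarrow> nat" where
  "extremal_multiset a b c d v = a + b * of_bool (v \<notin> coord_zero {0})
    + c * of_bool (v \<notin> coord_zero {0, 1}) + d * of_bool (v = unit_vec 0)"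

lemma mult_set_extremal_multiset:
  assumes "finite S"
  shows "mult_set (extremal_multiset a b c d) S = a * card S + b * card (S - coord_zero {0})
    + c * card (S - coord_zero {0, 1}) + d * card (S \<inter> {unit_vec 0})"
  using assms unfolding mult_set_def extremal_multiset_def
  by (simp add: sum.distrib sum_distrib_left[symmetric] Diff_eq Compl_eq)

lemma extremal_multiset_plane:
  assumes "S \<in> pg_subspaces 4 2"
  shows "mult_set (extremal_multiset a b c d) S \<le> 7 * a + 4 * b + 6 * c + d"
proof -
  obtain U where U: "lin_subspace 4 U" "card U = 8" and S: "S = U - {vzero}"
    using assms unfolding pg_subspaces_def by auto
  have fin: "finite U" by (rule lin_subspace_finite[OF U(1)])
  have S_compl: "S - coord_zero I = U - coord_zero I" for I
    using S by auto
  have "card S = 7"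
    using S U(2) fin lin_subspace_vzero[OF U(1)] by simp
  moreover have "card (S - coord_zero {0}) \<le> 4"
    using card_diff_coord_zero_le[OF U(1), of "{0}"] U(2) S_compl by simp
  moreover have "card (S - coord_zero {0, 1}) \<le> 6"
    using card_diff_coord_zero_le[OF U(1), of "{0, 1}"] U(2) S_compl by simp
  moreover have "card (S \<inter> {unit_vec 0}) \<le> 1"
    by (rule order_trans[OF card_mono[of "{unit_vec 0}"]]) auto
  ultimately show ?thesis
    using fin S mult_set_extremal_multiset[of S a b c d]
    by (simp add: add_mono mult_le_mono2)
qed

lemma extremal_multiset_total:
  "mult_set (extremal_multiset a b c d) (pg_points 4) = 31 * a + 16 * b + 24 * c + d"
proof -
  have card_compl: "card (pg_points 4 - coord_zero I) = 32 - 2 ^ (5 - card I)"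
    if "I \<subseteq> {0..4}" for I
  proof -
    have "pg_points 4 - coord_zero I = vecs 4 - (vecs 4 \<inter> coord_zero I)"
      by (auto simp: pg_points_def)
    then show ?thesis
      using card_vecs_coord_zero[OF that] by (simp add: card_Diff_subset card_vecs)
  qed
  have "unit_vec 0 \<in> pg_points 4"
    by (auto simp: pg_points_def vecs_def unit_vec_def vzero_def fun_eq_iff)
  then have "pg_points 4 \<inter> {unit_vec 0} = {unit_vec 0}" by blast
  moreover have "card (pg_points 4) = 31"
    by (simp add: pg_points_def card_vecs)
  ultimately show ?thesis
    using mult_set_extremal_multiset[of "pg_points 4" a b c d]
      card_compl[of "{0}"] card_compl[of "{0, 1}"]
    by (simp add: pg_points_def)
qed

lemma m2_2_4_eqI:
  assumes "7 * a + 4 * b + 6 * c + d = w" and "31 * a + 16 * b + 24 * c + d = m"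
    and "\<And>n W L p. n + 6 * L \<le> 7 * W \<Longrightarrow> W + 2 * p \<le> 3 * L \<Longrightarrow> L \<le> 3 * p
      \<Longrightarrow> W \<le> w \<Longrightarrow> n \<le> m"
  shows "m2 2 4 w = m"
proof (rule m2_eqI[where K' = "extremal_multiset a b c d"])
  fix K assume "\<forall>S\<in>pg_subspaces 4 2. mult_set K S \<le> w"
  then show "mult_set K (pg_points 4) \<le> m"
    by (rule heaviest_flag_inequalities) (rule assms(3))
qed (use assms(1,2) extremal_multiset_plane extremal_multiset_total in auto)

section \<open>Planes of weight 3\<close>

definition all_ones :: "nat \<Rightarrow> vec2" where
  "all_ones N = (\<lambda>k. k \<le> N)"

definition frame :: "nat \<Rightarrow> vec2 set" where
  "frame N = insert (all_ones N) (unit_vec ` {0..N})"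

lemma unit_vec_ne_all_ones: "0 < N \<Longrightarrow> unit_vec i \<noteq> all_ones N"
  unfolding unit_vec_def all_ones_def
  by (metis One_nat_def less_one linorder_not_le not_gr0 order_refl zero_le)

lemma frame_subset_pg_points: "frame N \<subseteq> pg_points N"
  by (auto simp: frame_def pg_points_def vecs_def unit_vec_def all_ones_def vzero_def fun_eq_iff)

lemma card_frame:
  assumes "0 < N"
  shows "card (frame N) = N + 2"
proof -
  have "inj_on unit_vec {0..N}"
    by (rule inj_onI) (metis unit_vec_def)
  moreover have "all_ones N \<notin> unit_vec ` {0..N}"
    using unit_vec_ne_all_ones[OF assms] by (metis imageE)
  ultimately show ?thesis
    unfolding frame_def by (simp add: card_image)
qed

lemma frame_zero_sum:
  assumes "0 < N" and T: "T \<subseteq> frame N" "T \<noteq> {}" "vsum T = vzero"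
  shows "T = frame N"
proof -
  have pair: "unit_vec i \<in> T \<longleftrightarrow> all_ones N \<in> T" if "i \<le> N" for i
  proof -
    have "{x\<in>T. x i} = T \<inter> {unit_vec i, all_ones N}"
      using T(1) that by (auto simp: frame_def unit_vec_def all_ones_def)
    moreover have "\<not> vsum T i" using T(3) by simp
    ultimately have "even (card (T \<inter> {unit_vec i, all_ones N}))"
      unfolding vsum_def by simp
    then show ?thesis
      using unit_vec_ne_all_ones[OF assms(1), of i]
      by (cases "unit_vec i \<in> T"; cases "all_ones N \<in> T") auto
  qed
  obtain x where "x \<in> T" using T(2) by blast
  then have "all_ones N \<in> T"
    using T(1) pair unfolding frame_def by auto
  then show ?thesis
    using T(1) pair unfolding frame_def by auto
qed

lemma card_Int_frame_le:
  assumes "0 < N" and U: "lin_subspace N U" "card U = 2 ^ j" and "j \<le> N"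
  shows "card (U \<inter> frame N) \<le> j"
proof (rule ccontr)
  assume "\<not> ?thesis"
  then obtain T where T: "T \<subseteq> U \<inter> frame N" "card T = Suc j"
    by (meson not_less_eq_eq obtain_subset_with_card_n)
  have fin: "finite T"
    using T(1) finite_subset lin_subspace_finite[OF U(1)] by blast
  have "lin_indep T"
    unfolding lin_indep_def
  proof (intro allI impI)
    fix T' assume T': "T' \<subseteq> T" "T' \<noteq> {}"
    have "card T' < card (frame N)"
      using card_mono[OF fin T'(1)] T(2) \<open>j \<le> N\<close> card_frame[OF assms(1)] by simp
    then show "vsum T' \<noteq> vzero"
      using frame_zero_sum[OF assms(1)] T(1) T' by blast
  qed
  then have "2 ^ Suc j \<le> card U"
    using lin_indep_card_le[OF U(1) fin] T by auto
  then show False using U(2) by simp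
qed

lemma frame_total: "mult_set (\<lambda>v. of_bool (v \<in> frame 4)) (pg_points 4) = 6"
  using frame_subset_pg_points[of 4] card_frame[of 4]
  by (simp add: mult_set_def pg_points_def Int_absorb1 Collect_mem_eq)

lemma frame_plane:
  assumes "S \<in> pg_subspaces 4 2"
  shows "mult_set (\<lambda>v. of_bool (v \<in> frame 4)) S \<le> 3"
proof -
  obtain U where U: "lin_subspace 4 U" "card U = 2 ^ 3" and S: "S = U - {vzero}"
    using assms unfolding pg_subspaces_def by auto
  have "mult_set (\<lambda>v. of_bool (v \<in> frame 4)) S = card (S \<inter> frame 4)"
    using lin_subspace_finite[OF U(1)] S by (simp add: mult_set_def Collect_mem_eq)
  also have "\<dots> \<le> card (U \<inter> frame 4)"
    using lin_subspace_finite[OF U(1)] S by (intro card_mono) auto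
  also have "\<dots> \<le> 3"
    by (rule card_Int_frame_le[OF _ U]) simp_all
  finally show ?thesis .
qed

lemma heavy_line_point_bounds:
  assumes valid: "\<forall>S\<in>pg_subspaces 4 2. mult_set K S \<le> 3"
    and heavy: "7 \<le> mult_set K (pg_points 4)"
  shows heavy_line_bound: "\<And>U. lin_subspace 4 U \<Longrightarrow> card U = 4 \<Longrightarrow> mult_set K (U - {vzero}) \<le> 2"
    and heavy_point_bound: "\<And>P. P \<in> pg_points 4 \<Longrightarrow> K P \<le> 1"
proof -
  note V = lin_subspace_whole[of 4]
  have plane: "mult_set K (C - {vzero}) \<le> 3" if "lin_subspace 4 C" "card C = 8" for C
    using valid pg_subspacesI[OF that(1), of 2] that(2) by simp
  show line: "mult_set K (U - {vzero}) \<le> 2" if U: "lin_subspace 4 U" "card U = 4" for U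
  proof -
    have "4 * mult_set K (pg_points 4) + 24 * mult_set K (U - {vzero}) \<le> 28 * 3"
      using extension_averaging[OF U(1) V lin_subspace_subset[OF U(1)], of K 3] U(2) plane
      by (simp add: card_vecs pg_points_def)
    then show ?thesis using heavy by linarith
  qed
  fix P assume "P \<in> pg_points 4"
  then have P: "P \<in> vecs 4" "P \<noteq> vzero" by (auto simp: pg_points_def)
  have "{vzero, P} - {vzero} = {P}" using P(2) by blast
  then have "2 * mult_set K (pg_points 4) + 28 * K P \<le> 30 * 2"
    using extension_averaging[OF lin_subspace_pair[OF P(1)] V, of K 2] P line
    by (simp add: card_vecs pg_points_def mult_set_def)
  then show "K P \<le> 1" using heavy by linarith
qed

lemma mult_set_eq_card_support:
  assumes "finite S" "\<And>P. P \<in> S \<Longrightarrow> K P \<le> 1"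
  shows "mult_set K S = card {P\<in>S. K P \<noteq> 0}"
proof -
  have "K P = of_bool (K P \<noteq> 0)" if "P \<in> S" for P
    using assms(2)[OF that] by auto
  then have "mult_set K S = (\<Sum>P\<in>S. of_bool (K P \<noteq> 0))"
    unfolding mult_set_def by (intro sum.cong) auto
  then show ?thesis using assms(1) by (simp add: Collect_conj_eq Int_commute)
qed

lemma heavy_support_lin_indep:
  assumes valid: "\<forall>S\<in>pg_subspaces 4 2. mult_set K S \<le> 3"
    and heavy: "7 \<le> mult_set K (pg_points 4)"
    and T: "finite T" "T \<subseteq> {P\<in>pg_points 4. K P \<noteq> 0}" "card T \<le> 4"
  shows "lin_indep T"
proof -
  define S where "S = {P\<in>pg_points 4. K P \<noteq> 0}"
  have S_vecs: "S \<subseteq> vecs 4" unfolding S_def pg_points_def by blast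
  have weight: "mult_set K (U - {vzero}) = card (S \<inter> U)" if "lin_subspace 4 U" for U
  proof -
    have "U - {vzero} \<subseteq> pg_points 4"
      using lin_subspace_subset[OF that] by (auto simp: pg_points_def)
    then have "mult_set K (U - {vzero}) = card {P\<in>U - {vzero}. K P \<noteq> 0}"
      using lin_subspace_finite[OF that] heavy_point_bound[OF valid heavy]
      by (intro mult_set_eq_card_support) auto
    also have "{P\<in>U - {vzero}. K P \<noteq> 0} = S \<inter> U"
      using lin_subspace_subset[OF that] unfolding S_def pg_points_def by blast
    finally show ?thesis .
  qed
  show ?thesis
  proof (rule lin_indep_if_sparse[OF S_vecs _ T[folded S_def]])
    fix U j assume U: "lin_subspace 4 U" "card U = 2 ^ j" "j < 4"
    have "card (S \<inter> U) \<le> card (U - {vzero})"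
      using lin_subspace_finite[OF U(1)] by (intro card_mono) (auto simp: S_def pg_points_def)
    also have "\<dots> = 2 ^ j - 1"
      using lin_subspace_finite[OF U(1)] lin_subspace_vzero[OF U(1)] U(2) by simp
    finally have small: "card (S \<inter> U) \<le> 2 ^ j - 1" .
    consider "j = 0" | "j = 1" | "j = 2" | "j = 3" using U(3) by linarith
    then show "card (S \<inter> U) \<le> j"
    proof cases
      case 3
      then show ?thesis
        using heavy_line_bound[OF valid heavy U(1)] U(2) weight[OF U(1)] by simp
    next
      case 4
      then show ?thesis
        using bspec[OF valid pg_subspacesI[OF U(1), of 2]] U(2) weight[OF U(1)] by simp
    qed (use small in simp_all)
  qed
qed

lemma m2_2_4_3_upper:
  assumes valid: "\<forall>S\<in>pg_subspaces 4 2. mult_set K S \<le> 3"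
  shows "mult_set K (pg_points 4) \<le> 6"
proof (rule ccontr)
  assume "\<not> ?thesis"
  then have heavy: "7 \<le> mult_set K (pg_points 4)" by simp
  define S where "S = {P\<in>pg_points 4. K P \<noteq> 0}"
  have "mult_set K (pg_points 4) = card S"
    unfolding S_def using heavy_point_bound[OF valid heavy]
    by (intro mult_set_eq_card_support) (simp_all add: pg_points_def)
  with heavy obtain S7 where S7: "S7 \<subseteq> S" "card S7 = 7"
    using obtain_subset_with_card_n[of 7 S] by auto
  then have "finite S7" "S7 \<subseteq> vecs 4"
    unfolding S_def pg_points_def by (auto intro: card_ge_0_finite)
  then obtain D where D: "D \<subseteq> S7" "D \<noteq> {}" "vsum D = vzero" "3 * card D \<le> 2 * card S7"
    using ex_short_zero_sum[of S7 4] S7(2) by auto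
  have "lin_indep D"
    using D S7 \<open>finite S7\<close> unfolding S_def
    by (intro heavy_support_lin_indep[OF valid heavy]) (auto intro: finite_subset)
  then show False
    using D(2,3) unfolding lin_indep_def by blast
qed

theorem mainTheorem5:
  fixes t :: nat
  shows "m2 2 4 (7*t + 4) = 31*t + 16 \<and>
         m2 2 4 (7*t + 5) = 31*t + 17 \<and>
         m2 2 4 (7*t + 6) = 31*t + 24 \<and>
         m2 2 4 (7*t + 7) = 31*t + 31 \<and>
         m2 2 4 (7*t + 8) = 31*t + 32 \<and>
         m2 2 4 (7*t + 9) = 31*t + 33 \<and>
         m2 2 4 (7*t + 10) = 31*t + 40 \<and>
         m2 2 4 3 = 6"
proof -
  note bound = flag_inequalities_bound[where t = t]
  have "m2 2 4 3 = 6"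
    by (rule m2_eqI[OF m2_2_4_3_upper _ frame_total]) (auto intro: frame_plane)
  then show ?thesis
    using m2_2_4_eqI[of t 1 0 0, OF _ _ bound(1)] m2_2_4_eqI[of t 1 0 1, OF _ _ bound(2)]
      m2_2_4_eqI[of t 0 1 0, OF _ _ bound(3)] m2_2_4_eqI[of "t + 1" 0 0 0, OF _ _ bound(4)]
      m2_2_4_eqI[of "t + 1" 0 0 1, OF _ _ bound(5)] m2_2_4_eqI[of "t + 1" 0 0 2, OF _ _ bound(6)]
      m2_2_4_eqI[of t 1 1 0, OF _ _ bound(7)]
    by simp
qed

end
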